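(* Let $k\ge 3$ and let $c_1\ge c_2\ge\dots\ge c_k>0$ be constants with $\sum_{i=1}^k c_i=1$. For every $n$ such that all $c_i n$ are integers, let $G_n$ be the complete $k$-partite graph with parts $V_1,\dots,V_k$, $|V_i|=c_i n$. Then: (i) if $c_2\le \tfrac12(1-c_1)$, $\mathrm{RC}(G_n)=n+c_1n-1$; (ii) if $c_2> \tfrac12(1-c_1)$, $\mathrm{RC}(G_n)=2(n-c_2n)$.
   Context: Robot crawler model: let $G=(V,E)$ be a finite connected simple graph with $|V|=n$. An initial weighting is a bijection $w_0:V\to\{-n,-n+1,\dots,-1\}$. At time $1$ the crawler visits $w_0^{-1}(-n)$. If the crawler visits vertex $v$ at time $t$, then $w_t(v)=t$ and $w_t(u)=w_{t-1}(u)$ for all $u\neq v$. If $\min_{y\in V}w_t(y)>0$, the process stops and $\mathcal{RC}(G,w_0):=t$. Otherwise, at time $t+1$ the crawler moves to the neighbour $u$ of $v$ minimising $w_t(u)$ (the weights are distinct, so this is well defined). A vertex is "cleaned" at the first time it is visited. With $\Omega_n$ the set of all $n!$ initial weightings, $\mathrm{rc}(G)=\min_{w_0\in\Omega_n}\mathcal{RC}(G,w_0)$, $\mathrm{RC}(G)=\max_{w_0\in\Omega_n}\mathcal{RC}(G,w_0)$, and $\overline{\mathrm{rc}}(G)=\mathbb{E}\,\mathcal{RC}(G,\overline{w_0})$ where $\overline{w_0}$ is uniformly distributed on $\Omega_n$. A complete $k$-partite graph with parts $V_1,\dots,V_k$ has an edge between $u$ and $v$ if and only if $u,v$ lie in different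 parts. *)

theory Defs
  imports Complex_Main
begin

text \<open>Time-indexed robot crawler process:
crawl V E w0 t = (w_t, vertex visited at time t); time 0 is the initial state.\<close>

fun crawl :: "'a set \<Rightarrow> ('a \<Rightarrow> 'a \<Rightarrow> bool) \<Rightarrow> ('a \<Rightarrow> int) \<Rightarrow> nat \<Rightarrow> ('a \<Rightarrow> int) \<times> 'a" where
  "crawl V E w0 0 = (w0, undefined)"
| "crawl V E w0 (Suc t) =
     (let (w, v) = crawl V E w0 t;
          u = (if t = 0 then (THE x. x \<in> V \<and> w0 x = - int (card V))
               else (ARG_MIN w x. x \<in> V \<and> E v x))
      in (w(u := int (Suc t)), u))"

definition RC_time :: "'a set \<Rightarrow> ('a \<Rightarrow> 'a \<Rightarrow> bool) \<Rightarrow> ('a \<Rightarrow> int) \<Rightarrow> nat" where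
  "RC_time V E w0 = (LEAST t. \<forall>y\<in>V. fst (crawl V E w0 t) y > 0)"

definition init_weightings :: "'a set \<Rightarrow> ('a \<Rightarrow> int) set" where
  "init_weightings V = {w. bij_betw w V {- int (card V) .. -1} \<and> (\<forall>x. x \<notin> V \<longrightarrow> w x = 0)}"

definition RC_max :: "'a set \<Rightarrow> ('a \<Rightarrow> 'a \<Rightarrow> bool) \<Rightarrow> nat" where
  "RC_max V E = Max (RC_time V E ` init_weightings V)"

definition kpart_V :: "nat \<Rightarrow> (nat \<Rightarrow> nat) \<Rightarrow> (nat \<times> nat) set" where
  "kpart_V k s = {(i, j). 1 \<le> i \<and> i \<le> k \<and> j < s i}"

definition kpart_E :: "nat \<Rightarrow> (nat \<Rightarrow> nat) \<Rightarrow> nat \<times> nat \<Rightarrow> nat \<times> nat \<Rightarrow> bool" where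
  "kpart_E k s x y = (x \<in> kpart_V k s \<and> y \<in> kpart_V k s \<and> fst x \<noteq> fst y)"

end

theory Submission
  imports Defs
begin

text \<open>Call the crawler trapped when every dirty vertex lies in its current part, and let \<open>T\<close> be
  the first time this happens. Up to \<open>T\<close> the crawler cleans a new vertex at every step; from
  then on it alternates between a clean vertex of another part and a dirty one, so
  \<open>RC = T + 2(n - T) = 2n - T\<close>. At time \<open>T\<close> the \<open>n - T\<close> dirty vertices share a part with
  the crawler, so \<open>RC \<le> n + c\<^sub>1 n - 1\<close>; every other part was cleaned completely before \<open>T\<close>,
  never at two consecutive steps, so \<open>T \<ge> 2 c\<^sub>2 n\<close>. Conversely, a listing of the vertices whose
  first \<open>T\<close> entries alternate between parts and whose remaining entries lie in the part of
  entry \<open>T\<close> is followed by the crawler under the weighting given by the list, with trap time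
  \<open>T\<close>; riffling the vertices sorted by part yields listings attaining both bounds.\<close>

lemma card_no_two_consecutive:
  assumes "S \<subseteq> {1..<T}" and "\<And>s. s \<in> S \<Longrightarrow> Suc s \<notin> S"
  shows "2 * card S \<le> T"
proof -
  have fin: "finite S" using assms(1) finite_subset by blast
  have "S \<inter> Suc ` S = {}" using assms(2) by blast
  hence "card (S \<union> Suc ` S) = 2 * card S"
    using fin by (simp add: card_Un_disjoint card_image)
  moreover have "S \<union> Suc ` S \<subseteq> {1..T}" using assms(1) by auto
  ultimately show ?thesis by (metis card_atLeastAtMost card_mono diff_Suc_1 finite_atLeastAtMost)
qed

text \<open>Place \<open>t\<close> of the riffled order receives element \<open>riffle M t\<close> of the original one: the
  first \<open>M\<close> elements are dealt alternately from the halves \<open>[0, h)\<close> and \<open>[h, M)\<close>, where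
  \<open>h = \<lceil>M/2\<rceil>\<close>, and the remaining ones stay in place.\<close>
definition riffle :: "nat \<Rightarrow> nat \<Rightarrow> nat" where
  "riffle M t = (if t < M then t div 2 + (t mod 2) * ((M + 1) div 2) else t)"

lemma riffle_even: "2 * a < M \<Longrightarrow> riffle M (2 * a) = a"
  by (simp add: riffle_def)

lemma riffle_odd: "2 * a + 1 < M \<Longrightarrow> riffle M (2 * a + 1) = a + (M + 1) div 2"
  by (simp add: riffle_def)

lemma riffle_ge: "M \<le> t \<Longrightarrow> riffle M t = t"
  by (simp add: riffle_def)

lemma riffle_less: "t < M \<Longrightarrow> riffle M t < M \<and> (even t \<longleftrightarrow> riffle M t < (M + 1) div 2)"
  by (cases "even t") (auto simp: riffle_def elim!: evenE oddE)

lemma inj_riffle: "inj (riffle M)"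
proof (rule injI)
  fix a b assume eq: "riffle M a = riffle M b"
  show "a = b"
  proof (cases "a < M \<and> b < M")
    case True
    hence "even a \<longleftrightarrow> even b" using riffle_less[of a M] riffle_less[of b M] eq by auto
    thus ?thesis using True eq by (cases "even a") (auto simp: riffle_def elim!: evenE oddE)
  next
    case False
    thus ?thesis using riffle_less[of a M] riffle_less[of b M] eq
      by (cases "a < M"; cases "b < M") (auto simp: riffle_def)
  qed
qed

lemma bij_betw_riffle: "M \<le> L \<Longrightarrow> bij_betw (riffle M) {..<L} {..<L}"
proof -
  assume "M \<le> L"
  have "riffle M t < L" if "t < L" for t
    using riffle_less[of t M] riffle_ge[of M t] that \<open>M \<le> L\<close> by (cases "t < M") auto
  hence "riffle M ` {..<L} \<subseteq> {..<L}" by auto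
  thus ?thesis using inj_on_subset[OF inj_riffle] by (simp add: bij_betw_def endo_inj_surj)
qed

section \<open>The crawler on a complete multipartite graph\<close>

locale multipartite_crawl =
  fixes V :: "'a set" and E :: "'a \<Rightarrow> 'a \<Rightarrow> bool"
    and part :: "'a \<Rightarrow> 'p" and w0 :: "'a \<Rightarrow> int"
  assumes finite_V: "finite V" and V_nonempty: "V \<noteq> {}"
    and E_iff: "E x y \<longleftrightarrow> x \<in> V \<and> y \<in> V \<and> part x \<noteq> part y"
    and other_part: "v \<in> V \<Longrightarrow> \<exists>x\<in>V. part x \<noteq> part v"
    and w0_init: "w0 \<in> init_weightings V"
begin

definition weight :: "nat \<Rightarrow> 'a \<Rightarrow> int" where
  "weight t = fst (crawl V E w0 t)"

definition visited :: "nat \<Rightarrow> 'a" where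
  "visited t = snd (crawl V E w0 t)"

definition dirty :: "nat \<Rightarrow> 'a set" where
  "dirty t = {x \<in> V. weight t x < 0}"

definition trapped :: "nat \<Rightarrow> bool" where
  "trapped t \<longleftrightarrow> (\<forall>x \<in> dirty t. part x = part (visited t))"

definition trap_time :: nat where
  "trap_time = (LEAST t. 1 \<le> t \<and> trapped t)"

lemma card_V_ge_1: "card V \<ge> 1"
  using finite_V V_nonempty by (simp add: Suc_le_eq card_gt_0_iff)

lemma w0_bij: "bij_betw w0 V {- int (card V) .. -1}"
  using w0_init by (simp add: init_weightings_def)

lemma w0_range: "x \<in> V \<Longrightarrow> - int (card V) \<le> w0 x \<and> w0 x < 0"
  using w0_bij by (force simp: bij_betw_def)

lemma weight_0: "weight 0 = w0"
  by (simp add: weight_def)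

lemma weight_Suc: "weight (Suc t) = (weight t)(visited (Suc t) := int (Suc t))"
  by (simp add: weight_def visited_def case_prod_beta Let_def)

lemma visited_1: "visited 1 = (THE x. x \<in> V \<and> w0 x = - int (card V))"
  by (simp add: visited_def case_prod_beta Let_def)

lemma visited_Suc:
  "t \<ge> 1 \<Longrightarrow> visited (Suc t) = (ARG_MIN (weight t) x. x \<in> V \<and> E (visited t) x)"
  by (simp add: weight_def visited_def case_prod_beta Let_def)

lemma visited_1_in_V: "visited 1 \<in> V" and w0_visited_1: "w0 (visited 1) = - int (card V)"
proof -
  have "- int (card V) \<in> {- int (card V) .. -1}" using card_V_ge_1 by simp
  then obtain x where "x \<in> V" "w0 x = - int (card V)"
    using w0_bij by (metis bij_betw_def imageE)
  moreover have "inj_on w0 V" using w0_bij by (simp add: bij_betw_def)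
  ultimately have "\<exists>!x. x \<in> V \<and> w0 x = - int (card V)"
    by (metis inj_onD)
  from theI'[OF this] show "visited 1 \<in> V" "w0 (visited 1) = - int (card V)"
    unfolding visited_1 by auto
qed

lemma visited_Suc_arg_min:
  assumes "t \<ge> 1" and "visited t \<in> V"
  shows "visited (Suc t) \<in> V" and "part (visited (Suc t)) \<noteq> part (visited t)"
    and "\<And>x. x \<in> V \<Longrightarrow> part x \<noteq> part (visited t) \<Longrightarrow> weight t (visited (Suc t)) \<le> weight t x"
proof -
  let ?S = "{x \<in> V. E (visited t) x}"
  have S: "finite ?S" "?S \<noteq> {}"
    using finite_V other_part[OF assms(2)] assms(2) by (auto simp: E_iff)
  have eq: "visited (Suc t) = arg_min_on (weight t) ?S"
    by (simp add: visited_Suc[OF assms(1)] arg_min_on_def)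
  show "visited (Suc t) \<in> V" "part (visited (Suc t)) \<noteq> part (visited t)"
    using arg_min_if_finite(1)[OF S, of "weight t"] by (auto simp: eq E_iff)
  show "weight t (visited (Suc t)) \<le> weight t x" if "x \<in> V" "part x \<noteq> part (visited t)" for x
    using arg_min_if_finite(2)[OF S, of "weight t"] that assms(2) by (auto simp: eq E_iff not_less)
qed

lemma visited_in_V: "t \<ge> 1 \<Longrightarrow> visited t \<in> V"
proof (induction t rule: nat_induct_at_least)
  case base show ?case by (rule visited_1_in_V)
next
  case (Suc t) show ?case by (rule visited_Suc_arg_min(1)[OF Suc])
qed

lemma visited_Suc_part: "t \<ge> 1 \<Longrightarrow> part (visited (Suc t)) \<noteq> part (visited t)"
  using visited_Suc_arg_min(2) visited_in_V by blast

lemma weight_visited_Suc_le: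
  "t \<ge> 1 \<Longrightarrow> x \<in> V \<Longrightarrow> part x \<noteq> part (visited t) \<Longrightarrow> weight t (visited (Suc t)) \<le> weight t x"
  using visited_Suc_arg_min(3) visited_in_V by blast

lemma weight_neg_eq_w0: "weight t x < 0 \<Longrightarrow> weight t x = w0 x"
  by (induction t) (auto simp: weight_0 weight_Suc)

lemma weight_nonzero: "x \<in> V \<Longrightarrow> weight t x \<noteq> 0"
proof (induction t)
  case 0 then show ?case using w0_range[of x] by (simp add: weight_0)
next
  case (Suc t) then show ?case by (simp add: weight_Suc)
qed

lemma dirty_0: "dirty 0 = V"
  using w0_range by (auto simp: dirty_def weight_0)

lemma dirty_Suc: "dirty (Suc t) = dirty t - {visited (Suc t)}"
  by (auto simp: dirty_def weight_Suc)

lemma dirty_subset: "dirty t \<subseteq> V"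
  by (auto simp: dirty_def)

lemma finite_dirty: "finite (dirty t)"
  using finite_subset[OF dirty_subset finite_V] .

lemma visited_not_dirty: "t \<ge> 1 \<Longrightarrow> visited t \<notin> dirty t"
  by (cases t) (simp_all add: dirty_Suc)

lemma all_clean_iff: "(\<forall>y\<in>V. fst (crawl V E w0 t) y > 0) \<longleftrightarrow> dirty t = {}"
proof -
  have "0 < weight t y \<longleftrightarrow> \<not> weight t y < 0" if "y \<in> V" for y
    using weight_nonzero[OF that, of t] by linarith
  thus ?thesis unfolding dirty_def weight_def[symmetric] by auto
qed

lemma visited_Suc_dirty: "t \<ge> 1 \<Longrightarrow> \<not> trapped t \<Longrightarrow> visited (Suc t) \<in> dirty t"
proof -
  assume t: "t \<ge> 1" and "\<not> trapped t"
  then obtain x where x: "x \<in> dirty t" "part x \<noteq> part (visited t)"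
    by (auto simp: trapped_def)
  have "weight t (visited (Suc t)) \<le> weight t x"
    using weight_visited_Suc_le[OF t _ x(2)] x(1) dirty_subset by blast
  with x(1) visited_Suc_arg_min(1)[OF t visited_in_V[OF t]] show ?thesis
    by (simp add: dirty_def)
qed

lemma visited_Suc_clean: "t \<ge> 1 \<Longrightarrow> trapped t \<Longrightarrow> visited (Suc t) \<notin> dirty t"
  using visited_Suc_part by (auto simp: trapped_def)

lemma visited_before_trap:
  assumes "t \<ge> 1" and "\<And>s. 1 \<le> s \<Longrightarrow> s < t \<Longrightarrow> \<not> trapped s"
  shows "inj_on visited {1..t} \<and> visited ` {1..t} = V - dirty t"
  using assms
proof (induction t rule: nat_induct_at_least)
  case base
  have "dirty 1 = V - {visited 1}" by (simp add: dirty_Suc dirty_0)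
  then show ?case using visited_1_in_V by auto
next
  case (Suc t)
  hence IH: "inj_on visited {1..t}" "visited ` {1..t} = V - dirty t" by auto
  have "visited (Suc t) \<in> dirty t" using Suc by (intro visited_Suc_dirty) auto
  moreover have "{1..Suc t} = insert (Suc t) {1..t}" by auto
  ultimately show ?case using IH dirty_subset[of t] by (auto simp: dirty_Suc)
qed

lemma card_dirty_before_trap:
  assumes "t \<ge> 1" and "\<And>s. 1 \<le> s \<Longrightarrow> s < t \<Longrightarrow> \<not> trapped s"
  shows "card (dirty t) = card V - t"
proof -
  from visited_before_trap[OF assms] have "card (V - dirty t) = t"
    by (metis card_atLeastAtMost card_image diff_Suc_1)
  thus ?thesis using card_Diff_subset[OF finite_dirty dirty_subset, of t]
      card_mono[OF finite_V dirty_subset, of t]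
    by linarith
qed

lemma exists_trapped: "\<exists>t. 1 \<le> t \<and> t \<le> card V \<and> trapped t"
proof (rule ccontr)
  assume "\<not> ?thesis"
  hence none: "\<And>s. 1 \<le> s \<Longrightarrow> s \<le> card V \<Longrightarrow> \<not> trapped s" by blast
  hence "dirty (card V) = {}"
    using card_dirty_before_trap[OF card_V_ge_1] finite_dirty by simp
  with none[OF card_V_ge_1] show False by (simp add: trapped_def)
qed

lemma trap_time_ge_1: "1 \<le> trap_time"
  and trapped_trap_time: "trapped trap_time"
  and trap_time_le_card: "trap_time \<le> card V"
  and not_trapped_before_trap_time: "1 \<le> s \<Longrightarrow> s < trap_time \<Longrightarrow> \<not> trapped s"
proof -
  obtain t where t: "1 \<le> t" "t \<le> card V" "trapped t" using exists_trapped by blast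
  show "1 \<le> trap_time" "trapped trap_time"
    unfolding trap_time_def using LeastI[of "\<lambda>t. 1 \<le> t \<and> trapped t" t] t by auto
  show "trap_time \<le> card V"
    unfolding trap_time_def using Least_le[of "\<lambda>t. 1 \<le> t \<and> trapped t" t] t by auto
  show "1 \<le> s \<Longrightarrow> s < trap_time \<Longrightarrow> \<not> trapped s"
    unfolding trap_time_def using not_less_Least by blast
qed

lemma card_dirty_trap_time: "card (dirty trap_time) = card V - trap_time"
  by (intro card_dirty_before_trap trap_time_ge_1 not_trapped_before_trap_time)

lemma after_trap_step:
  assumes "t \<ge> 1" "trapped t" "dirty t \<noteq> {}"
  shows "dirty (Suc t) = dirty t" and "dirty (Suc (Suc t)) = dirty t - {visited (Suc (Suc t))}"
    and "visited (Suc (Suc t)) \<in> dirty t" and "trapped (Suc (Suc t))"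
proof -
  show same: "dirty (Suc t) = dirty t"
    using visited_Suc_clean[OF assms(1,2)] by (auto simp: dirty_Suc)
  then show "dirty (Suc (Suc t)) = dirty t - {visited (Suc (Suc t))}" by (simp add: dirty_Suc)
  obtain x where x: "x \<in> dirty t" using assms(3) by blast
  have "part x \<noteq> part (visited (Suc t))"
    using x assms(2) visited_Suc_part[OF assms(1)] by (auto simp: trapped_def)
  hence "\<not> trapped (Suc t)" using x same by (auto simp: trapped_def)
  thus new: "visited (Suc (Suc t)) \<in> dirty t"
    using visited_Suc_dirty[of "Suc t"] same assms(1) by simp
  show "trapped (Suc (Suc t))"
    using new assms(2) by (auto simp: trapped_def dirty_Suc same)
qed

lemma after_trap:
  assumes "t \<ge> 1" "trapped t" "j \<le> card (dirty t)"
  shows "trapped (t + 2 * j) \<and> card (dirty (t + 2 * j)) = card (dirty t) - j"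
  using assms(3)
proof (induction j)
  case 0 then show ?case using assms by simp
next
  case (Suc j)
  hence IH: "trapped (t + 2 * j)" "card (dirty (t + 2 * j)) = card (dirty t) - j" by auto
  have "dirty (t + 2 * j) \<noteq> {}" using IH(2) Suc.prems by auto
  note step = after_trap_step[OF _ IH(1) this]
  have "t + 2 * Suc j = Suc (Suc (t + 2 * j))" by simp
  thus ?case using step(2-4) IH(2) assms(1) finite_dirty by (simp add: card_Diff_singleton)
qed

lemma dirty_nonempty: "t < 2 * card V - trap_time \<Longrightarrow> dirty t \<noteq> {}"
proof (cases "t < trap_time")
  case True
  show ?thesis
  proof (cases "t = 0")
    case False
    hence "card (dirty t) = card V - t"
      using True by (intro card_dirty_before_trap not_trapped_before_trap_time) auto
    thus ?thesis using True trap_time_le_card by auto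
  qed (use dirty_0 V_nonempty in simp)
next
  case False
  assume t: "t < 2 * card V - trap_time"
  define j where "j = (t - trap_time) div 2"
  have j: "j < card (dirty trap_time)"
    using t False trap_time_le_card card_dirty_trap_time unfolding j_def by auto
  note after = after_trap[OF trap_time_ge_1 trapped_trap_time less_imp_le[OF j]]
  hence ne: "dirty (trap_time + 2 * j) \<noteq> {}" using j by auto
  have "t - trap_time = 2 * j \<or> t - trap_time = Suc (2 * j)" unfolding j_def by presburger
  then consider "t = trap_time + 2 * j" | "t = Suc (trap_time + 2 * j)" using False by linarith
  then show ?thesis
    by cases (use ne after_trap_step(1)[OF _ _ ne] trap_time_ge_1 after in auto)
qed

lemma RC_time_eq: "RC_time V E w0 = 2 * card V - trap_time"
  unfolding RC_time_def all_clean_iff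
proof (rule Least_equality)
  have "trap_time + 2 * (card V - trap_time) = 2 * card V - trap_time"
    using trap_time_le_card by simp
  thus "dirty (2 * card V - trap_time) = {}"
    using after_trap[OF trap_time_ge_1 trapped_trap_time order_refl] finite_dirty
    by (simp add: card_dirty_trap_time)
qed (use dirty_nonempty not_le in blast)

lemma RC_time_le_card_trap_part:
  "RC_time V E w0 + 1 \<le> card V + card {x \<in> V. part x = part (visited trap_time)}"
proof -
  let ?P = "{x \<in> V. part x = part (visited trap_time)}"
  have v: "visited trap_time \<in> ?P" using visited_in_V[OF trap_time_ge_1] by simp
  have "dirty trap_time \<subseteq> ?P - {visited trap_time}"
    using trapped_trap_time visited_not_dirty[OF trap_time_ge_1] dirty_subset
    by (auto simp: trapped_def)
  hence "card (dirty trap_time) \<le> card (?P - {visited trap_time})"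
    using finite_V by (intro card_mono) auto
  moreover have "card ?P \<ge> 1" using finite_V v by (auto simp: Suc_le_eq card_gt_0_iff)
  ultimately have "card (dirty trap_time) + 1 \<le> card ?P"
    using v by (simp add: card_Diff_singleton)
  thus ?thesis using RC_time_eq card_dirty_trap_time trap_time_le_card by simp
qed

lemma two_card_part_le_trap_time:
  assumes q: "q \<noteq> part (visited trap_time)"
  shows "2 * card {x \<in> V. part x = q} \<le> trap_time"
proof -
  define S where "S = {t \<in> {1..trap_time}. part (visited t) = q}"
  have phase: "inj_on visited {1..trap_time}" "visited ` {1..trap_time} = V - dirty trap_time"
    using visited_before_trap[OF trap_time_ge_1 not_trapped_before_trap_time] by auto
  have "visited ` S = {x \<in> visited ` {1..trap_time}. part x = q}"
    unfolding S_def by auto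
  also have "\<dots> = {x \<in> V. part x = q}"
    using trapped_trap_time q unfolding phase(2) trapped_def by auto
  finally have "visited ` S = {x \<in> V. part x = q}" .
  moreover have "inj_on visited S" by (rule inj_on_subset[OF phase(1)]) (auto simp: S_def)
  ultimately have "card S = card {x \<in> V. part x = q}" using card_image by metis
  moreover have "2 * card S \<le> trap_time"
  proof (rule card_no_two_consecutive)
    show "S \<subseteq> {1..<trap_time}"
    proof
      fix t assume "t \<in> S"
      hence "1 \<le> t" "t \<le> trap_time" "t \<noteq> trap_time" using q unfolding S_def by auto
      thus "t \<in> {1..<trap_time}" by simp
    qed
    show "Suc s \<notin> S" if "s \<in> S" for s
      using that visited_Suc_part[of s] unfolding S_def by auto
  qed
  ultimately show ?thesis by simp
qed

context
  fixes xs :: "'a list" and T0 :: nat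
  assumes distinct_xs: "distinct xs" and set_xs: "set xs = V"
    and w0_xs: "\<And>i. i < card V \<Longrightarrow> w0 (xs ! i) = int i - int (card V)"
    and T0: "1 \<le> T0" "T0 \<le> card V"
    and alternating: "\<And>i. i + 1 < T0 \<Longrightarrow> part (xs ! i) \<noteq> part (xs ! (i + 1))"
begin

lemma length_xs: "length xs = card V"
  using distinct_card[OF distinct_xs] set_xs by simp

lemma drop_xs: "t < card V \<Longrightarrow> drop t xs = xs ! t # drop (Suc t) xs"
  using length_xs by (simp add: Cons_nth_drop_Suc)

lemma visited_follows_list:
  "1 \<le> t \<Longrightarrow> t \<le> T0 \<Longrightarrow> visited t = xs ! (t - 1) \<and> dirty t = set (drop t xs)"
proof (induction t rule: nat_induct_at_least)
  case base
  have "xs ! 0 \<in> V" "w0 (xs ! 0) = - int (card V)"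
    using w0_xs[of 0] card_V_ge_1 nth_mem[of 0 xs] length_xs set_xs by auto
  moreover have "inj_on w0 V" using w0_bij by (simp add: bij_betw_def)
  ultimately have v1: "visited 1 = xs ! 0"
    using visited_1_in_V w0_visited_1 by (metis inj_onD)
  have "xs = xs ! 0 # drop 1 xs" using drop_xs[of 0] card_V_ge_1 by simp
  hence "V - {xs ! 0} = set (drop 1 xs)"
    using distinct_xs set_xs by (metis Diff_insert_absorb distinct.simps(2) list.simps(15))
  moreover have "dirty 1 = V - {visited 1}" using dirty_Suc[of 0] dirty_0 by simp
  ultimately have "dirty 1 = set (drop 1 xs)" using v1 by simp
  then show ?case using v1 by simp
next
  case (Suc t)
  hence IH: "visited t = xs ! (t - 1)" "dirty t = set (drop t xs)" and t: "t < T0" by auto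
  have tV: "t < card V" using t T0 by simp
  have dirty_t: "xs ! t \<in> dirty t" using IH drop_xs[OF tV] by simp
  have "part (xs ! t) \<noteq> part (visited t)"
    using alternating[of "t - 1"] t Suc.hyps IH by simp
  hence "weight t (visited (Suc t)) \<le> weight t (xs ! t)"
    using weight_visited_Suc_le[OF Suc.hyps] dirty_t dirty_subset by blast
  also have "\<dots> = int t - int (card V)"
    using dirty_t weight_neg_eq_w0[of t "xs ! t"] w0_xs[OF tV] by (simp add: dirty_def)
  finally have le: "weight t (visited (Suc t)) \<le> int t - int (card V)" .
  hence new: "visited (Suc t) \<in> dirty t"
    using visited_in_V[of "Suc t"] tV unfolding dirty_def by simp
  then obtain j where "j < length (drop t xs)" "visited (Suc t) = drop t xs ! j"
    using IH(2) by (metis in_set_conv_nth)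
  hence j: "t + j < card V" "visited (Suc t) = xs ! (t + j)" using length_xs by auto
  have "weight t (visited (Suc t)) = int (t + j) - int (card V)"
    using new weight_neg_eq_w0[of t "visited (Suc t)"] w0_xs[OF j(1)] j(2)
    by (simp add: dirty_def)
  hence v: "visited (Suc t) = xs ! t" using le j(2) by simp
  have "xs ! t \<notin> set (drop (Suc t) xs)"
    using distinct_drop[OF distinct_xs, of t] drop_xs[OF tV] by simp
  hence "dirty (Suc t) = set (drop (Suc t) xs)"
    using IH(2) drop_xs[OF tV] v by (auto simp: dirty_Suc)
  then show ?case using v by simp
qed

lemma trap_time_of_list:
  assumes tail: "\<And>i. T0 \<le> i \<Longrightarrow> i < card V \<Longrightarrow> part (xs ! i) = part (xs ! (T0 - 1))"
  shows "trap_time = T0"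
  unfolding trap_time_def
proof (rule Least_equality)
  have "trapped T0" unfolding trapped_def
  proof
    fix x assume "x \<in> dirty T0"
    then obtain j where "j < length (drop T0 xs)" "x = drop T0 xs ! j"
      using visited_follows_list[of T0] T0 by (metis in_set_conv_nth order_refl)
    thus "part x = part (visited T0)"
      using tail[of "T0 + j"] length_xs visited_follows_list[of T0] T0 by simp
  qed
  thus "1 \<le> T0 \<and> trapped T0" using T0 by simp
  have "\<not> trapped t" if "1 \<le> t" "t < T0" for t
  proof -
    have dirty_t: "xs ! t \<in> dirty t" and "visited t = xs ! (t - 1)"
      using visited_follows_list[of t] drop_xs[of t] that T0 by auto
    hence "part (xs ! t) \<noteq> part (visited t)" using alternating[of "t - 1"] that by auto
    thus ?thesis using dirty_t unfolding trapped_def by blast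
  qed
  thus "\<And>t. 1 \<le> t \<and> trapped t \<Longrightarrow> T0 \<le> t" by (meson not_le)
qed

end

end

section \<open>Complete \<open>k\<close>-partite graphs with antitone part sizes\<close>

definition part_block :: "(nat \<Rightarrow> nat) \<Rightarrow> nat \<Rightarrow> (nat \<times> nat) list" where
  "part_block s i = map (Pair i) [0..<s i]"

lemma length_part_block: "length (part_block s i) = s i"
  by (simp add: part_block_def)

lemma set_part_block: "set (part_block s i) = {i} \<times> {..<s i}"
  by (auto simp: part_block_def)

lemma nth_part_block: "j < s i \<Longrightarrow> part_block s i ! j = (i, j)"
  by (simp add: part_block_def)

lemma length_concat_part_blocks:
  "distinct is \<Longrightarrow> length (concat (map (part_block s) is)) = (\<Sum>i\<in>set is. s i)"
  by (simp add: length_concat length_part_block sum_list_distinct_conv_sum_set comp_def)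

lemma set_concat_part_blocks:
  "set (concat (map (part_block s) is)) = (\<Union>i\<in>set is. {i} \<times> {..<s i})"
  by (auto simp: set_part_block)

lemma sorted_concat_part_blocks:
  "sorted is \<Longrightarrow> sorted (map fst (concat (map (part_block s) is)))"
proof (induction "is")
  case (Cons i "is")
  have "sorted (map fst (part_block s i))" by (simp add: part_block_def sorted_iff_nth_mono)
  then show ?case using Cons by (auto simp: sorted_append set_part_block)
qed simp

lemma kpart_V_Sigma: "kpart_V k s = Sigma {1..k} (\<lambda>i. {..<s i})"
  by (auto simp: kpart_V_def)

locale kpart =
  fixes k :: nat and s :: "nat \<Rightarrow> nat"
  assumes k_ge_3: "k \<ge> 3"
    and s_pos: "1 \<le> i \<Longrightarrow> i \<le> k \<Longrightarrow> s i \<ge> 1"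
    and s_Suc_le: "1 \<le> i \<Longrightarrow> i < k \<Longrightarrow> s (Suc i) \<le> s i"
begin

abbreviation V where "V \<equiv> kpart_V k s"
abbreviation E where "E \<equiv> kpart_E k s"

definition N :: nat where
  "N = (\<Sum>i=1..k. s i)"

definition others :: "(nat \<times> nat) list" where
  "others = concat (map (part_block s) [2..<Suc k])"

definition m :: nat where
  "m = length others"

definition vlist :: "(nat \<times> nat) list" where
  "vlist = others @ part_block s 1"

lemma s_antimono:
  assumes "1 \<le> i" "i \<le> j" "j \<le> k"
  shows "s j \<le> s i"
  using assms(2,3)
proof (induction j rule: dec_induct)
  case (step j) then show ?case using s_Suc_le[of j] assms(1) by simp
qed simp

lemma finite_V: "finite V"
  by (simp add: kpart_V_Sigma)

lemma card_V: "card V = N"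
  unfolding kpart_V_Sigma N_def by simp

lemma fst_in_V: "x \<in> V \<Longrightarrow> 1 \<le> fst x \<and> fst x \<le> k"
  by (auto simp: kpart_V_def)

lemma card_part: "1 \<le> i \<Longrightarrow> i \<le> k \<Longrightarrow> card {x \<in> V. fst x = i} = s i"
proof -
  assume "1 \<le> i" "i \<le> k"
  hence "{x \<in> V. fst x = i} = {i} \<times> {..<s i}" by (auto simp: kpart_V_def)
  thus ?thesis by (simp add: card_cartesian_product)
qed

lemma crawl_on_kpart: "w \<in> init_weightings V \<Longrightarrow> multipartite_crawl V E fst w"
proof unfold_locales
  have in_V: "(i, 0) \<in> V" if "1 \<le> i" "i \<le> k" for i
    using s_pos[OF that] that by (simp add: kpart_V_def)
  show "finite V" by (rule finite_V)
  show "V \<noteq> {}" using in_V[of 1] k_ge_3 by auto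
  show "\<exists>x\<in>V. fst x \<noteq> fst v" for v
    using in_V[of 1] in_V[of 2] k_ge_3 by (cases "fst v = 1") force+
qed (simp_all add: kpart_E_def)

lemma RC_time_bounds:
  assumes w: "w \<in> init_weightings V"
  shows "RC_time V E w + 1 \<le> N + s 1" and "RC_time V E w + 2 * s 2 \<le> 2 * N"
proof -
  interpret crawl: multipartite_crawl V E fst w by (rule crawl_on_kpart[OF w])
  define P where "P = fst (crawl.visited crawl.trap_time)"
  have P: "1 \<le> P" "P \<le> k"
    unfolding P_def using crawl.visited_in_V[OF crawl.trap_time_ge_1] fst_in_V by auto
  have RC: "RC_time V E w = 2 * N - crawl.trap_time" using crawl.RC_time_eq card_V by simp
  have trap_le: "crawl.trap_time \<le> N" using crawl.trap_time_le_card card_V by simp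
  have "RC_time V E w + 1 \<le> N + s P"
    using crawl.RC_time_le_card_trap_part card_part[OF P] card_V unfolding P_def by simp
  thus "RC_time V E w + 1 \<le> N + s 1" using s_antimono[OF order_refl P(1,2)] by simp
  have "2 * s 2 \<le> crawl.trap_time"
  proof (cases "P = 2")
    case True
    hence "2 * s 1 \<le> crawl.trap_time"
      using crawl.two_card_part_le_trap_time[of 1] card_part[of 1] k_ge_3 unfolding P_def by simp
    thus ?thesis using s_antimono[of 1 2] k_ge_3 by simp
  next
    case False
    thus ?thesis
      using crawl.two_card_part_le_trap_time[of 2] card_part[of 2] k_ge_3 unfolding P_def by simp
  qed
  thus "RC_time V E w + 2 * s 2 \<le> 2 * N" using RC trap_le by simp
qed

lemma finite_RC_times: "finite (RC_time V E ` init_weightings V)"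
proof (rule finite_subset)
  show "RC_time V E ` init_weightings V \<subseteq> {..2 * N}" using RC_time_bounds(2) by fastforce
qed simp

lemma others_split: "others = part_block s 2 @ concat (map (part_block s) [3..<Suc k])"
  using k_ge_3 by (simp add: others_def upt_conv_Cons)

lemma N_eq: "N = s 1 + m"
proof -
  have "m = (\<Sum>i=2..k. s i)"
    unfolding m_def others_def by (subst length_concat_part_blocks) (auto intro: sum.cong)
  moreover have "N = s 1 + (\<Sum>i=2..k. s i)"
    unfolding N_def using k_ge_3 by (simp add: sum.atLeast_Suc_atMost numeral_2_eq_2)
  ultimately show ?thesis by simp
qed

lemma s2_le_m: "s 2 \<le> m"
  unfolding m_def others_split by (simp add: length_part_block)

lemma m_less_N: "m < N"
  using N_eq s_pos[of 1] k_ge_3 by simp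

lemma length_vlist: "length vlist = N"
  unfolding vlist_def using N_eq m_def by (simp add: length_part_block)

lemma set_vlist: "set vlist = V"
proof -
  have "set vlist = (\<Union>i\<in>{2..<Suc k}. {i} \<times> {..<s i}) \<union> {1} \<times> {..<s 1}"
    unfolding vlist_def others_def
    by (simp only: set_append set_concat_part_blocks set_upt set_part_block)
  also have "\<dots> = (\<Union>i\<in>insert 1 {2..<Suc k}. {i} \<times> {..<s i})"
    by (simp only: UN_insert Un_commute)
  also have "insert 1 {2..<Suc k} = {1..k}" using k_ge_3 by auto
  also have "(\<Union>i\<in>{1..k}. {i} \<times> {..<s i}) = V" unfolding kpart_V_def by auto
  finally show ?thesis .
qed

lemma distinct_vlist: "distinct vlist"
  by (rule card_distinct) (simp add: set_vlist card_V length_vlist)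

lemma nth_vlist_less_s2: "l < s 2 \<Longrightarrow> vlist ! l = (2, l)"
  unfolding vlist_def others_split m_def
  by (simp add: nth_append length_part_block nth_part_block)

lemma part_vlist_others: "l < m \<Longrightarrow> 2 \<le> fst (vlist ! l)"
proof -
  assume "l < m"
  hence "vlist ! l \<in> set others" unfolding vlist_def m_def by (simp add: nth_append)
  thus ?thesis
    unfolding others_def by (auto simp: set_concat_part_blocks set_part_block simp del: upt_Suc)
qed

lemma part_vlist_ge_3: "s 2 \<le> l \<Longrightarrow> l < m \<Longrightarrow> 3 \<le> fst (vlist ! l)"
proof -
  assume l: "s 2 \<le> l" "l < m"
  let ?rest = "concat (map (part_block s) [3..<Suc k])"
  have len: "l - s 2 < length ?rest"
    using l unfolding m_def others_split by (simp add: length_part_block del: upt_Suc)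
  moreover have "vlist ! l = ?rest ! (l - s 2)"
    using l len unfolding vlist_def m_def others_split
    by (simp add: nth_append length_part_block del: upt_Suc)
  ultimately have "vlist ! l \<in> set ?rest" by (metis nth_mem)
  thus ?thesis by (auto simp: set_concat_part_blocks set_part_block simp del: upt_Suc)
qed

lemma part_vlist_ge_m: "m \<le> l \<Longrightarrow> l < N \<Longrightarrow> fst (vlist ! l) = 1"
proof -
  assume "m \<le> l" "l < N"
  hence "vlist ! l = part_block s 1 ! (l - m)" unfolding vlist_def m_def by (simp add: nth_append)
  thus ?thesis using \<open>m \<le> l\<close> \<open>l < N\<close> N_eq by (simp add: nth_part_block)
qed

lemma part_vlist_mono: "a \<le> b \<Longrightarrow> b < m \<Longrightarrow> fst (vlist ! a) \<le> fst (vlist ! b)"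
proof -
  assume ab: "a \<le> b" "b < m"
  have "sorted (map fst others)" unfolding others_def by (rule sorted_concat_part_blocks[OF sorted_upt])
  hence "fst (others ! a) \<le> fst (others ! b)"
    using sorted_nth_mono[of "map fst others" a b] ab unfolding m_def by simp
  thus ?thesis using ab unfolding vlist_def m_def by (simp add: nth_append)
qed

lemma nth_vlist_in_V: "l < N \<Longrightarrow> vlist ! l \<in> V"
  using nth_mem[of l vlist] length_vlist set_vlist by simp

lemma same_part_vlist_dist:
  assumes ab: "a \<le> b" "b < m" and same: "fst (vlist ! a) = fst (vlist ! b)"
  shows "b - a < s 2"
proof -
  define q where "q = fst (vlist ! a)"
  have q: "2 \<le> q" "q \<le> k"
    using part_vlist_others[of a] fst_in_V[OF nth_vlist_in_V, of a] ab m_less_N unfolding q_def by auto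
  have "nth vlist ` {a..b} \<subseteq> {x \<in> V. fst x = q}"
  proof
    fix x assume "x \<in> nth vlist ` {a..b}"
    then obtain l where l: "a \<le> l" "l \<le> b" "x = vlist ! l" by auto
    have "fst x = q"
      using part_vlist_mono[of a l] part_vlist_mono[of l b] l ab same unfolding q_def by simp
    moreover have "x \<in> V" using nth_vlist_in_V[of l] l ab m_less_N by simp
    ultimately show "x \<in> {x \<in> V. fst x = q}" by simp
  qed
  moreover have "inj_on (nth vlist) {a..b}"
    using inj_on_nth[OF distinct_vlist, of "{a..b}"] ab m_less_N length_vlist by simp
  moreover have "finite {x \<in> V. fst x = q}" using finite_V by simp
  ultimately have "card {a..b} \<le> card {x \<in> V. fst x = q}" by (meson card_inj_on_le)
  also have "\<dots> \<le> s 2" using card_part[of q] q s_antimono[of 2 q] by simp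
  finally show ?thesis using ab by simp
qed

end

context kpart
begin

definition riffled :: "nat \<Rightarrow> (nat \<times> nat) list" where
  "riffled M = map (\<lambda>t. vlist ! riffle M t) [0..<N]"

lemma nth_riffled: "t < N \<Longrightarrow> riffled M ! t = vlist ! riffle M t"
  by (simp add: riffled_def)

lemma distinct_riffled: "M \<le> N \<Longrightarrow> distinct (riffled M)"
  and set_riffled: "M \<le> N \<Longrightarrow> set (riffled M) = V"
proof -
  assume "M \<le> N"
  hence bij: "bij_betw (riffle M) {..<N} {..<N}" by (rule bij_betw_riffle)
  have nth_bij: "bij_betw (nth vlist) {..<N} V"
    using bij_betw_nth[OF distinct_vlist] length_vlist set_vlist by (simp add: lessThan_atLeast0)
  have "bij_betw (\<lambda>t. vlist ! riffle M t) {..<N} V"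
    using bij_betw_trans[OF bij nth_bij] by (simp add: comp_def)
  thus "distinct (riffled M)" "set (riffled M) = V"
    unfolding riffled_def bij_betw_def by (simp_all add: distinct_map lessThan_atLeast0)
qed

lemma part_riffled_alternates:
  assumes "M \<le> N" and i: "i + 1 < M"
    and shift: "\<And>a. a + (M + 1) div 2 < M \<Longrightarrow> fst (vlist ! a) \<noteq> fst (vlist ! (a + (M + 1) div 2))"
    and shift_pred: "\<And>b. 1 \<le> b \<Longrightarrow> b < (M + 1) div 2 \<Longrightarrow>
                       fst (vlist ! b) \<noteq> fst (vlist ! (b + (M + 1) div 2 - 1))"
  shows "fst (riffled M ! i) \<noteq> fst (riffled M ! (i + 1))"
proof (cases "even i")
  case True
  then obtain a where a: "i = 2 * a" by blast
  have "riffle M i = a" "riffle M (i + 1) = a + (M + 1) div 2"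
    using riffle_even[of a M] riffle_odd[of a M] a i by simp_all
  moreover have "a + (M + 1) div 2 < M" using a i by simp
  ultimately show ?thesis using shift[of a] i assms(1) by (simp add: nth_riffled)
next
  case False
  then obtain a where a: "i = 2 * a + 1" by (blast elim: oddE)
  have "riffle M i = a + (M + 1) div 2" "riffle M (i + 1) = a + 1"
    using riffle_odd[of a M] riffle_even[of "a + 1" M] a i by simp_all
  moreover have "a + 1 < (M + 1) div 2" using a i by simp
  ultimately show ?thesis using shift_pred[of "a + 1"] i assms(1) by (simp add: nth_riffled)
qed

lemma exists_weighting_of_list:
  assumes distinct: "distinct xs" and set: "set xs = V" and T0: "1 \<le> T0" "T0 \<le> N"
    and alternating: "\<And>i. i + 1 < T0 \<Longrightarrow> fst (xs ! i) \<noteq> fst (xs ! (i + 1))"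
    and tail: "\<And>i. T0 \<le> i \<Longrightarrow> i < N \<Longrightarrow> fst (xs ! i) = fst (xs ! (T0 - 1))"
  shows "\<exists>w \<in> init_weightings V. RC_time V E w = 2 * N - T0"
proof -
  have len: "length xs = N" using distinct_card[OF distinct] set card_V by simp
  have xs_bij: "bij_betw (nth xs) {..<N} V"
    using bij_betw_nth[OF distinct] len set by (simp add: lessThan_atLeast0)
  define w where "w x = (if x \<in> V then int (inv_into {..<N} (nth xs) x) - int N else 0)" for x
  have w_xs: "w (xs ! i) = int i - int N" if "i < N" for i
    using that xs_bij bij_betw_inv_into_left[OF xs_bij] by (auto simp: w_def bij_betw_def)
  have "bij_betw (\<lambda>i. int i - int N) {..<N} {- int N .. -1}"
    by (rule bij_betw_byWitness[where f' = "\<lambda>y. nat (y + int N)"]) auto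
  hence "bij_betw ((\<lambda>i. int i - int N) \<circ> inv_into {..<N} (nth xs)) V {- int N .. -1}"
    by (rule bij_betw_trans[OF bij_betw_inv_into[OF xs_bij]])
  hence "bij_betw w V {- int N .. -1}"
    by (rule bij_betw_cong[THEN iffD1, rotated]) (simp add: w_def)
  hence w: "w \<in> init_weightings V" unfolding init_weightings_def card_V by (simp add: w_def)
  interpret crawl: multipartite_crawl V E fst w by (rule crawl_on_kpart[OF w])
  have "crawl.trap_time = T0"
    using crawl.trap_time_of_list[OF distinct set] w_xs T0 alternating tail card_V by simp
  thus ?thesis using w crawl.RC_time_eq card_V by auto
qed

lemma riffled_above: "M \<le> t \<Longrightarrow> t < N \<Longrightarrow> riffled M ! t = vlist ! t"
  by (simp add: nth_riffled riffle_ge)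

text \<open>Witness: the vertices outside the largest part, riffled so that consecutive ones lie in
  different parts, followed by the largest part.\<close>
lemma RC_time_attains_N_plus_s1:
  assumes small: "2 * s 2 \<le> m"
  shows "\<exists>w \<in> init_weightings V. RC_time V E w = N + s 1 - 1"
proof -
  define h where "h = (m + 1) div 2"
  have h: "s 2 \<le> h" using small unfolding h_def by simp
  have mN: "m \<le> N" using m_less_N by simp
  have shift: "fst (vlist ! a) \<noteq> fst (vlist ! (a + h))" if "a + h < m" for a
    using same_part_vlist_dist[of a "a + h"] that h by auto
  have shift_pred: "fst (vlist ! b) \<noteq> fst (vlist ! (b + h - 1))" if b: "1 \<le> b" "b < h" for b
  proof
    assume same: "fst (vlist ! b) = fst (vlist ! (b + h - 1))"
    have "b + h - 1 < m" using b unfolding h_def by simp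
    hence "h - 1 < s 2" using same_part_vlist_dist[of b "b + h - 1"] same b by simp
    hence "h = s 2" using h b by linarith
    hence "fst (vlist ! (b + h - 1)) = 2" using same nth_vlist_less_s2[of b] b by simp
    hence "b + h - 1 < s 2" using part_vlist_ge_3[of "b + h - 1"] \<open>b + h - 1 < m\<close> by fastforce
    thus False using b \<open>h = s 2\<close> by simp
  qed
  have last_other: "2 \<le> fst (riffled m ! (m - 1))"
    using riffle_less[of "m - 1" m] part_vlist_others m_less_N s2_le_m s_pos[of 2] k_ge_3
    by (simp add: nth_riffled)
  have largest: "fst (riffled m ! i) = 1" if "m \<le> i" "i < N" for i
    using that by (simp add: riffled_above part_vlist_ge_m)
  have eq: "N + s 1 - 1 = 2 * N - (m + 1)" using N_eq by simp
  show ?thesis unfolding eq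
  proof (rule exists_weighting_of_list[OF distinct_riffled[OF mN] set_riffled[OF mN]])
    show "1 \<le> m + 1" "m + 1 \<le> N" using m_less_N by auto
    show "fst (riffled m ! i) \<noteq> fst (riffled m ! (i + 1))" if "i + 1 < m + 1" for i
    proof (cases "i + 1 = m")
      case True
      hence "i = m - 1" by simp
      thus ?thesis using last_other largest[of "i + 1"] True m_less_N by simp
    next
      case False
      thus ?thesis using part_riffled_alternates[OF mN, of i] shift shift_pred that
        unfolding h_def by simp
    qed
    show "fst (riffled m ! i) = fst (riffled m ! (m + 1 - 1))" if "m + 1 \<le> i" "i < N" for i
      using largest that m_less_N by simp
  qed
qed

lemma part_vlist_ne_2: "s 2 \<le> l \<Longrightarrow> l < N \<Longrightarrow> fst (vlist ! l) \<noteq> 2"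
  using part_vlist_ge_3 part_vlist_ge_m by (cases "l < m") fastforce+

text \<open>Witness: the second part riffled with the next \<open>s 2\<close> vertices, the last of which lie in
  the largest part because \<open>m < 2 s\<^sub>2\<close>.\<close>
lemma RC_time_attains_2N_minus_2s2:
  assumes large: "m < 2 * s 2"
  shows "\<exists>w \<in> init_weightings V. RC_time V E w = 2 * N - 2 * s 2"
proof -
  define M where "M = 2 * s 2"
  have h: "(M + 1) div 2 = s 2" unfolding M_def by simp
  have s2: "1 \<le> s 2" using s_pos[of 2] k_ge_3 by simp
  have MN: "M \<le> N" unfolding M_def using N_eq s2_le_m s_antimono[of 1 2] k_ge_3 by simp
  have "M - 1 = 2 * (s 2 - 1) + 1" using s2 unfolding M_def by simp
  hence "riffle M (M - 1) = (s 2 - 1) + s 2"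
    using riffle_odd[of "s 2 - 1" M] s2 h unfolding M_def by simp
  hence last: "fst (riffled M ! (M - 1)) = 1"
    using large s2 MN by (simp add: nth_riffled part_vlist_ge_m M_def)
  show ?thesis unfolding M_def[symmetric]
  proof (rule exists_weighting_of_list[OF distinct_riffled[OF MN] set_riffled[OF MN]])
    show "1 \<le> M" "M \<le> N" using s2 MN unfolding M_def by auto
    show "fst (riffled M ! i) \<noteq> fst (riffled M ! (i + 1))" if "i + 1 < M" for i
    proof (rule part_riffled_alternates[OF MN that])
      show "fst (vlist ! a) \<noteq> fst (vlist ! (a + (M + 1) div 2))" if "a + (M + 1) div 2 < M" for a
        using that part_vlist_ne_2[of "a + s 2"] nth_vlist_less_s2[of a] MN h
        unfolding M_def by simp
      show "fst (vlist ! b) \<noteq> fst (vlist ! (b + (M + 1) div 2 - 1))"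
        if "1 \<le> b" "b < (M + 1) div 2" for b
        using that part_vlist_ne_2[of "b + s 2 - 1"] nth_vlist_less_s2[of b] MN h
        unfolding M_def by simp
    qed
    show "fst (riffled M ! i) = fst (riffled M ! (M - 1))" if "M \<le> i" "i < N" for i
      using that last large by (simp add: riffled_above part_vlist_ge_m M_def)
  qed
qed

lemma RC_max_kpart:
  "RC_max V E = (if 2 * s 2 \<le> m then N + s 1 - 1 else 2 * N - 2 * s 2)"
proof -
  have "RC_max V E = r" if "\<exists>w \<in> init_weightings V. RC_time V E w = r"
    and "\<And>w. w \<in> init_weightings V \<Longrightarrow> RC_time V E w \<le> r" for r
    unfolding RC_max_def using that by (intro Max_eqI finite_RC_times) auto
  moreover have "RC_time V E w \<le> N + s 1 - 1" if "w \<in> init_weightings V" for w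
    using RC_time_bounds(1)[OF that] by simp
  moreover have "RC_time V E w \<le> 2 * N - 2 * s 2" if "w \<in> init_weightings V" for w
    using RC_time_bounds(2)[OF that] by simp
  ultimately show ?thesis
    using RC_time_attains_N_plus_s1 RC_time_attains_2N_minus_2s2 by (simp add: not_le)
qed

lemma RC_max_kpart_real:
  "real (RC_max V E) = (if 2 * real (s 2) \<le> real N - real (s 1)
                         then real N + real (s 1) - 1 else 2 * (real N - real (s 2)))"
proof -
  have "s 2 \<le> N" "1 \<le> N + s 1" using N_eq s2_le_m s_pos[of 1] k_ge_3 by auto
  thus ?thesis using RC_max_kpart N_eq by (simp add: of_nat_diff)
qed

end

lemma kpart_of_fractions:
  fixes c :: "nat \<Rightarrow> real"
  assumes k: "k \<ge> 3" and c_mono: "\<forall>i. 1 \<le> i \<and> i < k \<longrightarrow> c (i + 1) \<le> c i"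
    and c_pos: "c k > 0" and n: "n > 0"
    and integral: "\<forall>i\<in>{1..k}. \<exists>m::nat. c i * real n = real m"
  shows "kpart k (\<lambda>i. nat \<lfloor>c i * real n\<rfloor>)"
    and "1 \<le> i \<Longrightarrow> i \<le> k \<Longrightarrow> real (nat \<lfloor>c i * real n\<rfloor>) = c i * real n"
proof -
  show size: "real (nat \<lfloor>c i * real n\<rfloor>) = c i * real n" if i: "1 \<le> i" "i \<le> k" for i
  proof -
    have "i \<in> {1..k}" using i by simp
    then obtain m :: nat where "c i * real n = real m" using integral by blast
    thus ?thesis by simp
  qed
  have "c k \<le> c i" if "1 \<le> i" "i \<le> k" for i
    using that(2)
  proof (induction i rule: inc_induct)
    case (step j) then show ?case using c_mono that(1) by (simp add: order_trans[of _ "c (Suc j)"])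
  qed simp
  hence pos: "c i * real n > 0" if "1 \<le> i" "i \<le> k" for i
    using that c_pos n by (simp add: less_le_trans)
  show "kpart k (\<lambda>i. nat \<lfloor>c i * real n\<rfloor>)"
  proof
    show "3 \<le> k" by (rule k)
    show "1 \<le> nat \<lfloor>c i * real n\<rfloor>" if "1 \<le> i" "i \<le> k" for i
      using pos[OF that] size[OF that] by linarith
    show "nat \<lfloor>c (Suc i) * real n\<rfloor> \<le> nat \<lfloor>c i * real n\<rfloor>" if "1 \<le> i" "i < k" for i
      using c_mono that by (intro nat_mono floor_mono mult_right_mono) auto
  qed
qed

theorem theorem2:
  fixes k n :: nat and c :: "nat \<Rightarrow> real"
  assumes "k \<ge> 3"
    and "\<forall>i. 1 \<le> i \<and> i < k \<longrightarrow> c (i + 1) \<le> c i"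
    and "c k > 0"
    and "(\<Sum>i=1..k. c i) = 1"
    and "n > 0"
    and "\<forall>i\<in>{1..k}. \<exists>m::nat. c i * real n = real m"
  shows "(c 2 \<le> (1 - c 1) / 2 \<longrightarrow>
           real (RC_max (kpart_V k (\<lambda>i. nat \<lfloor>c i * real n\<rfloor>)) (kpart_E k (\<lambda>i. nat \<lfloor>c i * real n\<rfloor>)))
             = real n + c 1 * real n - 1)
       \<and> (c 2 > (1 - c 1) / 2 \<longrightarrow>
           real (RC_max (kpart_V k (\<lambda>i. nat \<lfloor>c i * real n\<rfloor>)) (kpart_E k (\<lambda>i. nat \<lfloor>c i * real n\<rfloor>)))
             = 2 * (real n - c 2 * real n))"
proof -
  define s where "s i = nat \<lfloor>c i * real n\<rfloor>" for i
  note sizes = kpart_of_fractions[OF assms(1-3,5,6), folded s_def]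
  interpret kpart k s by (rule sizes(1))
  have "real N = (\<Sum>i=1..k. c i * real n)" unfolding N_def by (simp add: sizes(2))
  hence N: "real N = real n" using assms(4) by (simp add: sum_distrib_right[symmetric])
  have s12: "real (s 1) = c 1 * real n" "real (s 2) = c 2 * real n" using sizes(2) assms(1) by auto
  have "2 * (c 2 * real n) \<le> real n - c 1 * real n \<longleftrightarrow> (2 * c 2) * real n \<le> (1 - c 1) * real n"
    by (simp add: algebra_simps)
  also have "\<dots> \<longleftrightarrow> c 2 \<le> (1 - c 1) / 2" using assms(5) by (simp add: mult.commute[of _ 2])
  finally show ?thesis unfolding s_def[symmetric] RC_max_kpart_real N s12 by auto
qed

end
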